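(* Let $X$ be a finite set and let $S: X\times X\to X\times X$, $S(x,y)=(g_x(y),f_y(x))$, be a non-degenerate symmetric set-theoretical solution of the quantum Yang–Baxter equation which is not the trivial solution. Let $G(X,S)=\langle X \mid xy=g_x(y)f_y(x),\ x,y\in X\rangle$ be its structure group. Then $G(X,S)$ is not bi-orderable. Furthermore, $G(X,S)$ has generalized torsion elements.
   Context: A set-theoretical solution is a pair $(X,S)$ with $S:X\times X\to X\times X$ a bijection written $S(x,y)=(g_x(y),f_y(x))$ for functions $f_x,g_x:X\to X$. It is non-degenerate if all $f_x,g_x$ are bijections; involutive if $S\circ S=\mathrm{Id}$; braided if $S^{12}S^{23}S^{12}=S^{23}S^{12}S^{23}$ on $X^3$ (where $S^{i,i+1}$ acts on the $i$-th and $(i+1)$-th components); symmetric if involutive and braided. The solution is trivial if $f_x=g_x=\mathrm{Id}_X$ for all $x\in X$. A group is bi-orderable if it admits a strict total order invariant under both left and right multiplication. An element $g\neq 1$ of a group $G$ is a generalized torsion element if there exist $h_1,\dots,h_n\in G$ with $\prod_{i=1}^n h_igh_i^{-1}=1$. *)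

theory Defs
  imports "HOL-Algebra.Group"
begin

text \<open>A set-theoretical solution on the (finite) type 'a, written
  S(x,y) = (g x y, f y x), i.e. g x = g_x and f y = f_y.\<close>

definition sol_map :: "('a \<Rightarrow> 'a \<Rightarrow> 'a) \<Rightarrow> ('a \<Rightarrow> 'a \<Rightarrow> 'a) \<Rightarrow> 'a \<times> 'a \<Rightarrow> 'a \<times> 'a" where
  "sol_map g f = (\<lambda>(x, y). (g x y, f y x))"

definition non_degenerate :: "('a \<Rightarrow> 'a \<Rightarrow> 'a) \<Rightarrow> ('a \<Rightarrow> 'a \<Rightarrow> 'a) \<Rightarrow> bool" where
  "non_degenerate g f \<longleftrightarrow> (\<forall>x. bij (f x) \<and> bij (g x))"

definition involutive_sol :: "('a \<Rightarrow> 'a \<Rightarrow> 'a) \<Rightarrow> ('a \<Rightarrow> 'a \<Rightarrow> 'a) \<Rightarrow> bool" where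
  "involutive_sol g f \<longleftrightarrow> sol_map g f \<circ> sol_map g f = id"

definition S12 :: "('a \<times> 'a \<Rightarrow> 'a \<times> 'a) \<Rightarrow> 'a \<times> 'a \<times> 'a \<Rightarrow> 'a \<times> 'a \<times> 'a" where
  "S12 S = (\<lambda>(x, y, z). let (u, v) = S (x, y) in (u, v, z))"

definition S23 :: "('a \<times> 'a \<Rightarrow> 'a \<times> 'a) \<Rightarrow> 'a \<times> 'a \<times> 'a \<Rightarrow> 'a \<times> 'a \<times> 'a" where
  "S23 S = (\<lambda>(x, y, z). let (v, w) = S (y, z) in (x, v, w))"

definition braided_sol :: "('a \<Rightarrow> 'a \<Rightarrow> 'a) \<Rightarrow> ('a \<Rightarrow> 'a \<Rightarrow> 'a) \<Rightarrow> bool" where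
  "braided_sol g f \<longleftrightarrow>
     S12 (sol_map g f) \<circ> S23 (sol_map g f) \<circ> S12 (sol_map g f)
   = S23 (sol_map g f) \<circ> S12 (sol_map g f) \<circ> S23 (sol_map g f)"

definition symmetric_sol :: "('a \<Rightarrow> 'a \<Rightarrow> 'a) \<Rightarrow> ('a \<Rightarrow> 'a \<Rightarrow> 'a) \<Rightarrow> bool" where
  "symmetric_sol g f \<longleftrightarrow> involutive_sol g f \<and> braided_sol g f"

definition trivial_sol :: "('a \<Rightarrow> 'a \<Rightarrow> 'a) \<Rightarrow> ('a \<Rightarrow> 'a \<Rightarrow> 'a) \<Rightarrow> bool" where
  "trivial_sol g f \<longleftrightarrow> (\<forall>x. f x = id \<and> g x = id)"

text \<open>Structure group as a presentation: words over letters (x, b), where b = True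
  marks the formal inverse of generator x; the congruence generated by free
  cancellation and the relations x y = g_x(y) f_y(x).\<close>

inductive weq :: "('a \<Rightarrow> 'a \<Rightarrow> 'a) \<Rightarrow> ('a \<Rightarrow> 'a \<Rightarrow> 'a) \<Rightarrow> ('a \<times> bool) list \<Rightarrow> ('a \<times> bool) list \<Rightarrow> bool"
  for g f where
  weq_refl: "weq g f u u"
| weq_sym: "weq g f u v \<Longrightarrow> weq g f v u"
| weq_trans: "weq g f u v \<Longrightarrow> weq g f v w \<Longrightarrow> weq g f u w"
| weq_cong: "weq g f u v \<Longrightarrow> weq g f (a @ u @ b) (a @ v @ b)"
| weq_cancel: "weq g f [(x, b), (x, \<not> b)] []"
| weq_rel: "weq g f [(x, False), (y, False)] [(g x y, False), (f y x, False)]"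

definition structure_group :: "('a \<Rightarrow> 'a \<Rightarrow> 'a) \<Rightarrow> ('a \<Rightarrow> 'a \<Rightarrow> 'a) \<Rightarrow> ('a \<times> bool) list set monoid" where
  "structure_group g f =
     \<lparr> carrier = UNIV // {(u, v). weq g f u v},
       mult = (\<lambda>A B. {w. \<exists>u\<in>A. \<exists>v\<in>B. weq g f w (u @ v)}),
       one = {w. weq g f w []} \<rparr>"

definition bi_orderable :: "('b, 'c) monoid_scheme \<Rightarrow> bool" where
  "bi_orderable G \<longleftrightarrow> (\<exists>R :: 'b \<Rightarrow> 'b \<Rightarrow> bool.
      (\<forall>a\<in>carrier G. \<not> R a a) \<and>
      (\<forall>a\<in>carrier G. \<forall>b\<in>carrier G. \<forall>c\<in>carrier G. R a b \<longrightarrow> R b c \<longrightarrow> R a c) \<and>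
      (\<forall>a\<in>carrier G. \<forall>b\<in>carrier G. a \<noteq> b \<longrightarrow> R a b \<or> R b a) \<and>
      (\<forall>a\<in>carrier G. \<forall>b\<in>carrier G. \<forall>c\<in>carrier G.
          R a b \<longrightarrow> R (c \<otimes>\<^bsub>G\<^esub> a) (c \<otimes>\<^bsub>G\<^esub> b) \<and> R (a \<otimes>\<^bsub>G\<^esub> c) (b \<otimes>\<^bsub>G\<^esub> c)))"

definition generalized_torsion :: "('b, 'c) monoid_scheme \<Rightarrow> 'b \<Rightarrow> bool" where
  "generalized_torsion G t \<longleftrightarrow> t \<in> carrier G \<and> t \<noteq> \<one>\<^bsub>G\<^esub> \<and>
     (\<exists>hs. hs \<noteq> [] \<and> set hs \<subseteq> carrier G \<and>
        foldr (\<lambda>h acc. h \<otimes>\<^bsub>G\<^esub> t \<otimes>\<^bsub>G\<^esub> inv\<^bsub>G\<^esub> h \<otimes>\<^bsub>G\<^esub> acc) hs \<one>\<^bsub>G\<^esub> = \<one>\<^bsub>G\<^esub>)"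

end

theory Submission
  imports Defs
begin

text \<open>
  For a non-degenerate symmetric solution, x \<mapsto> (e_x, g_x) extends to a homomorphism from
  G(X,S) to the semidirect product \<int>^X \<rtimes> Sym(X), and two positive words are equal in
  G(X,S) as soon as their images in \<int>^X (their cocycles) agree.  If the solution is not
  trivial, some g_x moves some p.  Among positive words u_n with cocycle n e_p, two of them,
  u_i and u_j with i < j, have the same permutation part.  If k is the order of g_x, then u_i and
  u_j conjugate the same positive word to x^k, so N = u_j u_i^-1 commutes with x^k; but N does
  not commute with x, as the \<int>^X-component at p shows.  Hence t = [N, x] \<noteq> 1, while the
  product of the conjugates x^i t x^-i (i < k) telescopes to [N, x^k] = 1.  In a bi-ordered
  group a product of conjugates of an element greater than 1 is greater than 1, so G(X,S) is
  not bi-orderable.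
\<close>

section \<open>Generalized torsion and bi-orders\<close>

definition bi_invariant :: "('b, 'c) monoid_scheme \<Rightarrow> ('b \<Rightarrow> 'b \<Rightarrow> bool) \<Rightarrow> bool" where
  "bi_invariant G R \<longleftrightarrow> (\<forall>a\<in>carrier G. \<forall>b\<in>carrier G. \<forall>c\<in>carrier G.
     R a b \<longrightarrow> R (c \<otimes>\<^bsub>G\<^esub> a) (c \<otimes>\<^bsub>G\<^esub> b) \<and> R (a \<otimes>\<^bsub>G\<^esub> c) (b \<otimes>\<^bsub>G\<^esub> c))"

lemma bi_invariantD:
  assumes "bi_invariant G R" "R a b" "a \<in> carrier G" "b \<in> carrier G" "c \<in> carrier G"
  shows "R (c \<otimes>\<^bsub>G\<^esub> a) (c \<otimes>\<^bsub>G\<^esub> b)" "R (a \<otimes>\<^bsub>G\<^esub> c) (b \<otimes>\<^bsub>G\<^esub> c)"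
  using assms unfolding bi_invariant_def by blast+

lemma bi_invariant_conversep: "bi_invariant G R \<Longrightarrow> bi_invariant G R\<inverse>\<inverse>"
  unfolding bi_invariant_def by blast

lemma bi_orderable_iff:
  "bi_orderable G \<longleftrightarrow> (\<exists>R. irreflp_on (carrier G) R \<and> transp_on (carrier G) R \<and>
     totalp_on (carrier G) R \<and> bi_invariant G R)"
  unfolding bi_orderable_def irreflp_on_def transp_on_def totalp_on_def bi_invariant_def
  by (rule refl)

definition conj_prod :: "('b, 'c) monoid_scheme \<Rightarrow> 'b \<Rightarrow> 'b list \<Rightarrow> 'b" where
  "conj_prod G t hs = foldr (\<lambda>h acc. h \<otimes>\<^bsub>G\<^esub> t \<otimes>\<^bsub>G\<^esub> inv\<^bsub>G\<^esub> h \<otimes>\<^bsub>G\<^esub> acc) hs \<one>\<^bsub>G\<^esub>"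

lemma generalized_torsion_iff:
  "generalized_torsion G t \<longleftrightarrow> t \<in> carrier G \<and> t \<noteq> \<one>\<^bsub>G\<^esub> \<and>
     (\<exists>hs. hs \<noteq> [] \<and> set hs \<subseteq> carrier G \<and> conj_prod G t hs = \<one>\<^bsub>G\<^esub>)"
  by (simp add: generalized_torsion_def conj_prod_def)

context group
begin

lemma inv_mult_cancel_left [simp]: "x \<in> carrier G \<Longrightarrow> y \<in> carrier G \<Longrightarrow> inv x \<otimes> (x \<otimes> y) = y"
  by (simp add: m_assoc[symmetric])

lemma conj_prod_Nil [simp]: "conj_prod G t [] = \<one>"
  and conj_prod_Cons [simp]: "conj_prod G t (h # hs) = h \<otimes> t \<otimes> inv h \<otimes> conj_prod G t hs"
  by (simp_all add: conj_prod_def)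

lemma conj_prod_closed: "t \<in> carrier G \<Longrightarrow> set hs \<subseteq> carrier G \<Longrightarrow> conj_prod G t hs \<in> carrier G"
  by (induction hs) auto

lemma bi_invariant_conj_pos:
  assumes "bi_invariant G R" "R \<one> t" "t \<in> carrier G" "h \<in> carrier G"
  shows "R \<one> (h \<otimes> t \<otimes> inv h)"
proof -
  have "R h (h \<otimes> t)"
    using bi_invariantD(1)[OF assms(1,2) one_closed assms(3,4)] assms(4) by simp
  then have "R (h \<otimes> inv h) (h \<otimes> t \<otimes> inv h)"
    by (rule bi_invariantD(2)[OF assms(1) _ assms(4) m_closed[OF assms(4,3)] inv_closed[OF assms(4)]])
  then show ?thesis
    using assms(4) by simp
qed

lemma bi_invariant_mult_pos:
  assumes "transp_on (carrier G) R" "bi_invariant G R" "R \<one> a" "R \<one> b"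
    and "a \<in> carrier G" "b \<in> carrier G"
  shows "R \<one> (a \<otimes> b)"
proof -
  have "R a (a \<otimes> b)"
    using bi_invariantD(1)[OF assms(2,4) one_closed assms(6,5)] assms(5) by simp
  then show ?thesis
    by (rule transp_onD[OF assms(1) one_closed assms(5) m_closed[OF assms(5,6)] assms(3)])
qed

lemma conj_prod_pos:
  assumes "transp_on (carrier G) R" "bi_invariant G R" "R \<one> t" "t \<in> carrier G"
    and "hs \<noteq> []" "set hs \<subseteq> carrier G"
  shows "R \<one> (conj_prod G t hs)"
  using assms(5,6)
proof (induction hs rule: list_nonempty_induct)
  case (single h)
  then show ?case
    using bi_invariant_conj_pos[OF assms(2-4)] assms(4) by simp
next
  case (cons h hs)
  then show ?case
    using bi_invariant_conj_pos[OF assms(2-4)] conj_prod_closed[OF assms(4)] assms(4)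
    by (simp add: bi_invariant_mult_pos[OF assms(1,2)])
qed

theorem not_bi_orderable_if_generalized_torsion:
  assumes "generalized_torsion G t"
  shows "\<not> bi_orderable G"
proof
  assume "bi_orderable G"
  then obtain R where irr: "irreflp_on (carrier G) R" and tr: "transp_on (carrier G) R"
    and tot: "totalp_on (carrier G) R" and inv: "bi_invariant G R"
    unfolding bi_orderable_iff by blast
  obtain hs where t: "t \<in> carrier G" "t \<noteq> \<one>" and hs: "hs \<noteq> []" "set hs \<subseteq> carrier G"
    and prod: "conj_prod G t hs = \<one>"
    using assms unfolding generalized_torsion_iff by blast
  have "R \<one> t \<or> R t \<one>"
    using totalp_onD[OF tot one_closed t(1)] t(2) by auto
  moreover have "transp_on (carrier G) R\<inverse>\<inverse>"
    using tr by simp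
  ultimately have "R \<one> (conj_prod G t hs) \<or> R (conj_prod G t hs) \<one>"
    using conj_prod_pos[OF tr inv _ t(1) hs]
      conj_prod_pos[OF _ bi_invariant_conversep[OF inv] _ t(1) hs]
    by auto
  with prod irreflp_onD[OF irr one_closed] show False
    by simp
qed

lemma conj_prod_commutator_powers:
  assumes "N \<in> carrier G" "X \<in> carrier G"
  shows "conj_prod G (N \<otimes> X \<otimes> inv N \<otimes> inv X) (map (\<lambda>i. X [^] i) [a..<a + m])
     = X [^] a \<otimes> N \<otimes> X [^] m \<otimes> inv N \<otimes> inv (X [^] (a + m))"
proof (induction m arbitrary: a)
  case 0
  show ?case using assms by (simp add: m_assoc)
next
  case (Suc m)
  have "conj_prod G (N \<otimes> X \<otimes> inv N \<otimes> inv X) (map (\<lambda>i. X [^] i) [a..<a + Suc m])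
     = X [^] a \<otimes> (N \<otimes> X \<otimes> inv N \<otimes> inv X) \<otimes> inv (X [^] a) \<otimes>
       (X [^] Suc a \<otimes> N \<otimes> X [^] m \<otimes> inv N \<otimes> inv (X [^] (Suc a + m)))"
    using Suc.IH[of "Suc a"] by (simp add: upt_conv_Cons del: upt_Suc nat_pow_Suc)
  also have "\<dots> = X [^] a \<otimes> N \<otimes> (X \<otimes> X [^] m) \<otimes> inv N \<otimes> inv (X [^] (Suc a + m))"
    using assms by (simp add: m_assoc del: nat_pow_Suc add: nat_pow_Suc2)
  also have "\<dots> = X [^] a \<otimes> N \<otimes> X [^] Suc m \<otimes> inv N \<otimes> inv (X [^] (a + Suc m))"
    by (simp only: nat_pow_Suc2[OF assms(2), symmetric] add_Suc add_Suc_right)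
  finally show ?case .
qed

lemma commutator_eq_one_iff:
  assumes "N \<in> carrier G" "X \<in> carrier G"
  shows "N \<otimes> X \<otimes> inv N \<otimes> inv X = \<one> \<longleftrightarrow> N \<otimes> X = X \<otimes> N"
proof -
  have "N \<otimes> X \<otimes> inv N \<otimes> inv X = N \<otimes> X \<otimes> inv (X \<otimes> N)"
    using assms by (simp add: inv_mult_group m_assoc)
  then show ?thesis
    using assms by (simp add: inv_solve_right')
qed

theorem generalized_torsion_commutator:
  assumes "N \<in> carrier G" "X \<in> carrier G" "0 < (k::nat)"
    and "N \<otimes> X [^] k = X [^] k \<otimes> N" "N \<otimes> X \<noteq> X \<otimes> N"
  shows "generalized_torsion G (N \<otimes> X \<otimes> inv N \<otimes> inv X)"
proof -
  have "conj_prod G (N \<otimes> X \<otimes> inv N \<otimes> inv X) (map (\<lambda>i. X [^] i) [0..<k])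
      = N \<otimes> X [^] k \<otimes> inv N \<otimes> inv (X [^] k)"
    using conj_prod_commutator_powers[OF assms(1,2), of 0 k] assms(1,2) by simp
  also have "\<dots> = \<one>"
    using commutator_eq_one_iff[of N "X [^] k"] assms(1,2,4) by simp
  moreover have "N \<otimes> X \<otimes> inv N \<otimes> inv X \<noteq> \<one>"
    using commutator_eq_one_iff assms(1,2,5) by blast
  ultimately show ?thesis
    unfolding generalized_torsion_iff using assms(1-3)
    by (intro conjI exI[of _ "map (\<lambda>i. X [^] i) [0..<k]"]) auto
qed

lemma commute_if_conj_eq:
  assumes "U \<in> carrier G" "V \<in> carrier G" "A \<in> carrier G" "W \<in> carrier G"
    and "U \<otimes> A = W \<otimes> U" "V \<otimes> A = W \<otimes> V"
  shows "V \<otimes> inv U \<otimes> W = W \<otimes> (V \<otimes> inv U)"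
proof -
  have "W = U \<otimes> A \<otimes> inv U"
    using assms(1,3-5) by (simp add: m_assoc)
  then have "V \<otimes> inv U \<otimes> W = V \<otimes> A \<otimes> inv U"
    using assms(1-3) by (simp add: m_assoc)
  then show ?thesis
    using assms(1,2,4,6) by (simp add: m_assoc)
qed

end


section \<open>Words and the structure group\<close>

lemma weq_append_left: "weq g f u v \<Longrightarrow> weq g f (a @ u) (a @ v)"
  using weq_cong[of g f u v a "[]"] by simp

lemma weq_append_right: "weq g f u v \<Longrightarrow> weq g f (u @ b) (v @ b)"
  using weq_cong[of g f u v "[]" b] by simp

lemma weq_Cons: "weq g f u v \<Longrightarrow> weq g f (l # u) (l # v)"
  using weq_append_left[of g f u v "[l]"] by simp

definition word_inv :: "('a \<times> bool) list \<Rightarrow> ('a \<times> bool) list" where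
  "word_inv w = rev (map (\<lambda>(x, b). (x, \<not> b)) w)"

lemma word_inv_word_inv [simp]: "word_inv (word_inv w) = w"
  by (simp add: word_inv_def rev_map comp_def case_prod_beta)

lemma weq_word_inv_append: "weq g f (word_inv w @ w) []"
proof (induction w)
  case Nil
  show ?case by (simp add: word_inv_def weq_refl)
next
  case (Cons l w)
  obtain x b where l: "l = (x, b)" by (cases l)
  have "weq g f (word_inv w @ [(x, \<not> b), (x, \<not> \<not> b)] @ w) (word_inv w @ [] @ w)"
    by (intro weq_append_left weq_append_right weq_cancel)
  then show ?case
    using Cons weq_trans by (fastforce simp: word_inv_def l)
qed

lemma weq_append_word_inv: "weq g f (w @ word_inv w) []"
  using weq_word_inv_append[of g f "word_inv w"] by simp

definition word_class ::
    "('a \<Rightarrow> 'a \<Rightarrow> 'a) \<Rightarrow> ('a \<Rightarrow> 'a \<Rightarrow> 'a) \<Rightarrow> ('a \<times> bool) list \<Rightarrow> ('a \<times> bool) list set"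
  where "word_class g f w = {v. weq g f w v}"

lemma word_class_eq_iff: "word_class g f u = word_class g f v \<longleftrightarrow> weq g f u v"
  unfolding word_class_def by (blast intro: weq_refl weq_sym weq_trans)

lemma carrier_structure_group: "carrier (structure_group g f) = range (word_class g f)"
  by (auto simp: structure_group_def quotient_def word_class_def)

lemma one_structure_group: "\<one>\<^bsub>structure_group g f\<^esub> = word_class g f []"
  by (auto simp: structure_group_def word_class_def intro: weq_sym)

lemma mult_structure_group:
  "word_class g f u \<otimes>\<^bsub>structure_group g f\<^esub> word_class g f v = word_class g f (u @ v)"
proof -
  have "(\<exists>a. weq g f u a \<and> (\<exists>b. weq g f v b \<and> weq g f w (a @ b))) \<longleftrightarrow> weq g f (u @ v) w" for w
  proof
    assume "\<exists>a. weq g f u a \<and> (\<exists>b. weq g f v b \<and> weq g f w (a @ b))"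
    then obtain a b where "weq g f u a" "weq g f v b" "weq g f w (a @ b)" by blast
    then have "weq g f (u @ v) (a @ v)" "weq g f (a @ v) (a @ b)"
      by (auto intro: weq_append_left weq_append_right)
    with \<open>weq g f w (a @ b)\<close> show "weq g f (u @ v) w"
      by (blast intro: weq_trans weq_sym)
  qed (blast intro: weq_refl weq_sym)
  then show ?thesis
    by (simp add: structure_group_def word_class_def)
qed

lemma group_structure_group: "group (structure_group g f)"
proof (rule groupI)
  fix x
  assume "x \<in> carrier (structure_group g f)"
  then obtain w where "x = word_class g f w" by (auto simp: carrier_structure_group)
  then have "word_class g f (word_inv w) \<otimes>\<^bsub>structure_group g f\<^esub> x = \<one>\<^bsub>structure_group g f\<^esub>"
    by (simp add: mult_structure_group one_structure_group word_class_eq_iff weq_word_inv_append)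
  then show "\<exists>y\<in>carrier (structure_group g f). y \<otimes>\<^bsub>structure_group g f\<^esub> x = \<one>\<^bsub>structure_group g f\<^esub>"
    by (auto simp: carrier_structure_group)
qed (auto simp: carrier_structure_group mult_structure_group one_structure_group)

lemma inv_structure_group:
  "inv\<^bsub>structure_group g f\<^esub> (word_class g f w) = word_class g f (word_inv w)"
proof -
  interpret group "structure_group g f" by (rule group_structure_group)
  show ?thesis
    by (rule inv_equality)
      (auto simp: mult_structure_group one_structure_group word_class_eq_iff
        carrier_structure_group weq_word_inv_append)
qed

definition pos_word :: "'a list \<Rightarrow> ('a \<times> bool) list" where
  "pos_word w = map (\<lambda>x. (x, False)) w"

lemma pos_word_append: "pos_word (u @ v) = pos_word u @ pos_word v"
  by (simp add: pos_word_def)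

lemma pow_structure_group:
  "word_class g f [(x, False)] [^]\<^bsub>structure_group g f\<^esub> (k::nat)
     = word_class g f (pos_word (replicate k x))"
proof (induction k)
  case 0
  show ?case by (simp add: one_structure_group pos_word_def)
next
  case (Suc k)
  have "pos_word (replicate k x) @ [(x, False)] = pos_word (replicate (Suc k) x)"
    by (simp add: pos_word_def replicate_append_same)
  then show ?case
    by (simp add: Suc mult_structure_group)
qed


section \<open>The homomorphism to the semidirect product\<close>

text \<open>
  A triple (v, s, s') stands for the pair (v, s) of \<int>^X \<rtimes> Sym(X), with s' = s^-1 carried
  along so that the product is associative without bijectivity assumptions.
\<close>

type_synonym 'a sdp = "('a \<Rightarrow> int) \<times> ('a \<Rightarrow> 'a) \<times> ('a \<Rightarrow> 'a)"

definition sdp_mult :: "'a sdp \<Rightarrow> 'a sdp \<Rightarrow> 'a sdp" where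
  "sdp_mult a b = (case a of (v, s, s') \<Rightarrow> case b of (w, t, t') \<Rightarrow>
     (\<lambda>z. v z + w (s' z), s \<circ> t, t' \<circ> s'))"

definition sdp_one :: "'a sdp" where
  "sdp_one = (\<lambda>z. 0, id, id)"

lemma sdp_mult_assoc: "sdp_mult (sdp_mult a b) c = sdp_mult a (sdp_mult b c)"
  by (cases a; cases b; cases c) (auto simp: sdp_mult_def comp_def)

lemma sdp_one_mult [simp]: "sdp_mult sdp_one a = a"
  by (cases a; simp add: sdp_mult_def sdp_one_def comp_def)

lemma sdp_mult_right_inverse:
  assumes "sdp_mult a c = sdp_one" and "snd b = snd a"
  shows "sdp_mult b c = (\<lambda>z. fst b z - fst a z, id, id)"
  using assms by (cases a; cases b; cases c)
    (auto simp: sdp_mult_def sdp_one_def fun_eq_iff eq_neg_iff_add_eq_0 add.commute)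

fun letter_sdp :: "('a \<Rightarrow> 'a \<Rightarrow> 'a) \<Rightarrow> 'a \<times> bool \<Rightarrow> 'a sdp" where
  "letter_sdp g (x, False) = (\<lambda>z. of_bool (z = x), g x, inv_into UNIV (g x))"
| "letter_sdp g (x, True) = (\<lambda>z. - of_bool (g x z = x), inv_into UNIV (g x), g x)"

fun word_sdp :: "('a \<Rightarrow> 'a \<Rightarrow> 'a) \<Rightarrow> ('a \<times> bool) list \<Rightarrow> 'a sdp" where
  "word_sdp g [] = sdp_one"
| "word_sdp g (l # w) = sdp_mult (letter_sdp g l) (word_sdp g w)"

lemma word_sdp_append: "word_sdp g (u @ v) = sdp_mult (word_sdp g u) (word_sdp g v)"
  by (induction u) (auto simp: sdp_mult_assoc)

locale symmetric_solution =
  fixes g f :: "'a \<Rightarrow> 'a \<Rightarrow> 'a"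
  assumes bij_g: "bij (g x)"
    and g_involutive: "g (g x y) (f y x) = x"
    and g_braided: "g (g x y) \<circ> g (f y x) = g x \<circ> g y"
begin

lemma g_inv_cancel [simp]: "g x (inv_into UNIV (g x) z) = z" "inv_into UNIV (g x) (g x z) = z"
  using bij_g[of x] by (auto simp: bij_def surj_f_inv_f)

lemma word_sdp_weq: "weq g f u v \<Longrightarrow> word_sdp g u = word_sdp g v"
proof (induction rule: weq.induct)
  case (weq_cong u v a b)
  then show ?case by (simp add: word_sdp_append)
next
  case (weq_cancel x b)
  show ?case
    by (cases b) (auto simp: sdp_mult_def sdp_one_def comp_def fun_eq_iff)
next
  case (weq_rel x y)
  have "(inv_into UNIV (g x) z = y) = (z = g x y)" for z
    by auto
  moreover have "(inv_into UNIV (g (g x y)) z = f y x) = (z = x)" for z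
    using bij_inv_eq_iff[OF bij_g, of "f y x" "g x y" z] g_involutive[of x y] by auto
  moreover have "inv_into UNIV (g (f y x)) \<circ> inv_into UNIV (g (g x y))
      = inv_into UNIV (g y) \<circ> inv_into UNIV (g x)"
    using g_braided[of x y] by (metis bij_g o_inv_distrib)
  ultimately show ?case
    using g_braided[of x y] by (auto simp: sdp_mult_def sdp_one_def fun_eq_iff comp_def)
qed auto

end


section \<open>Positive words and their cocycles\<close>

fun cocycle :: "('a \<Rightarrow> 'a \<Rightarrow> 'a) \<Rightarrow> 'a list \<Rightarrow> 'a \<Rightarrow> nat" where
  "cocycle g [] = (\<lambda>z. 0)"
| "cocycle g (x # w) = (\<lambda>z. of_bool (z = x) + cocycle g w (inv_into UNIV (g x) z))"

fun word_perm :: "('a \<Rightarrow> 'a \<Rightarrow> 'a) \<Rightarrow> 'a list \<Rightarrow> 'a \<Rightarrow> 'a" where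
  "word_perm g [] = id"
| "word_perm g (x # w) = g x \<circ> word_perm g w"

fun word_perm_inv :: "('a \<Rightarrow> 'a \<Rightarrow> 'a) \<Rightarrow> 'a list \<Rightarrow> 'a \<Rightarrow> 'a" where
  "word_perm_inv g [] = id"
| "word_perm_inv g (x # w) = word_perm_inv g w \<circ> inv_into UNIV (g x)"

lemma word_sdp_pos_word:
  "word_sdp g (pos_word w) = (\<lambda>z. int (cocycle g w z), word_perm g w, word_perm_inv g w)"
  by (induction w) (auto simp: pos_word_def sdp_one_def sdp_mult_def fun_eq_iff)

lemma cocycle_append: "cocycle g (u @ v) z = cocycle g u z + cocycle g v (word_perm_inv g u z)"
proof -
  have "word_sdp g (pos_word (u @ v)) = sdp_mult (word_sdp g (pos_word u)) (word_sdp g (pos_word v))"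
    by (simp add: pos_word_append word_sdp_append)
  then have "int (cocycle g (u @ v) z) = int (cocycle g u z) + int (cocycle g v (word_perm_inv g u z))"
    by (simp add: word_sdp_pos_word sdp_mult_def fun_eq_iff)
  then show ?thesis
    by simp
qed

lemma word_perm_replicate: "word_perm g (replicate k x) = g x ^^ k"
  by (induction k) auto

context symmetric_solution
begin

lemma cocycle_eq_if_weq: "weq g f (pos_word u) (pos_word v) \<Longrightarrow> cocycle g u = cocycle g v"
  using word_sdp_weq by (fastforce simp: word_sdp_pos_word fun_eq_iff)

lemma word_perm_word_perm_inv [simp]: "word_perm g w (word_perm_inv g w z) = z"
  by (induction w arbitrary: z) auto

lemma cocycle_Cons_cancel: "cocycle g (x # u) = cocycle g (x # v) \<Longrightarrow> cocycle g u = cocycle g v"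
  by (fastforce simp: fun_eq_iff dest: fun_cong[of _ _ "g x _"])

end

locale finite_symmetric_solution = symmetric_solution g f
  for g f :: "'a::finite \<Rightarrow> 'a \<Rightarrow> 'a"
begin

lemma sum_cocycle: "(\<Sum>z\<in>UNIV. cocycle g w z) = length w"
proof (induction w)
  case (Cons x w)
  have "bij_betw (inv_into UNIV (g x)) UNIV UNIV"
    using bij_g[of x] by (simp add: bij_imp_bij_inv)
  then have "(\<Sum>z\<in>UNIV. cocycle g w (inv_into UNIV (g x) z)) = length w"
    using Cons by (simp add: sum.reindex_bij_betw)
  then show ?case
    by (simp add: sum.distrib)
qed simp

lemma cocycle_surj: "\<exists>w. cocycle g w = v"
proof (induction "\<Sum>z\<in>UNIV. v z" arbitrary: v)
  case 0
  then show ?case by (intro exI[of _ "[]"]) (simp add: fun_eq_iff)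
next
  case (Suc n)
  then obtain q where q: "v q > 0"
    by (metis gr0I sum_eq_0_iff finite_UNIV UNIV_I nat.distinct(1))
  define v' where "v' = (\<lambda>z. v z - of_bool (z = q))"
  have "(\<Sum>z\<in>UNIV. v' z) = n"
    using Suc(2) q sum.remove[of UNIV q v] sum.remove[of UNIV q v']
    by (simp add: v'_def sum.cong[of "UNIV - {q}" _ v' v])
  moreover have "bij_betw (g q) UNIV UNIV"
    using bij_g by simp
  ultimately have "(\<Sum>z\<in>UNIV. (v' \<circ> g q) z) = n"
    by (simp add: sum.reindex_bij_betw)
  then obtain w where "cocycle g w = v' \<circ> g q"
    using Suc(1) by blast
  then have "cocycle g (q # w) = v"
    using q by (auto simp: fun_eq_iff v'_def)
  then show ?case by blast
qed

lemma cocycle_Cons_surj: "0 < v q \<Longrightarrow> \<exists>w. cocycle g (q # w) = v"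
proof -
  assume "0 < v q"
  obtain w where "cocycle g w = (\<lambda>z. v (g q z) - of_bool (g q z = q))"
    using cocycle_surj by blast
  with \<open>0 < v q\<close> have "cocycle g (q # w) = v"
    by (auto simp: fun_eq_iff)
  then show ?thesis ..
qed

lemma length_eq_if_cocycle_eq: "cocycle g u = cocycle g v \<Longrightarrow> length u = length v"
  using sum_cocycle by metis

theorem weq_if_cocycle_eq: "cocycle g u = cocycle g v \<Longrightarrow> weq g f (pos_word u) (pos_word v)"
proof (induction "length u" arbitrary: u v)
  case 0
  have "u = []" "v = []"
    using 0(1)[symmetric] length_eq_if_cocycle_eq[OF 0(2)] by auto
  then show ?case by (simp add: weq_refl)
next
  case (Suc n)
  note IH = Suc.hyps(1)
  obtain x a where u: "u = x # a" and a: "n = length a"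
    using Suc.hyps(2) by (cases u) auto
  have "length v = Suc n"
    using Suc.hyps(2) length_eq_if_cocycle_eq[OF Suc.prems] by simp
  then obtain y b where v: "v = y # b" and b: "n = length b"
    by (cases v) auto
  have xa_yb: "cocycle g (x # a) = cocycle g (y # b)"
    using Suc.prems u v by simp
  show ?case
  proof (cases "x = y")
    case True
    then have "weq g f (pos_word a) (pos_word b)"
      using IH[OF a] xa_yb cocycle_Cons_cancel by blast
    then show ?thesis
      using u v True weq_Cons by (fastforce simp: pos_word_def)
  next
    case False
    \<comment> \<open>z is chosen so that the relation x z = g_x(z) f_z(x) rewrites x z c into a word starting with y.\<close>
    define z where "z = inv_into UNIV (g x) y"
    have "0 < cocycle g a z"
      using xa_yb[THEN fun_cong, of y] False by (simp add: z_def)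
    then obtain c where c: "cocycle g (z # c) = cocycle g a"
      using cocycle_Cons_surj by blast
    have a_zc: "weq g f (pos_word a) (pos_word (z # c))"
      using IH[OF a] c by simp
    have rel: "weq g f (pos_word (x # z # c)) (pos_word (y # f z x # c))"
      using weq_append_right[OF weq_rel[of g f x z], of "pos_word c"]
      by (simp add: pos_word_def z_def)
    have "cocycle g (y # f z x # c) = cocycle g (x # z # c)"
      using cocycle_eq_if_weq[OF rel] by simp
    also have "\<dots> = cocycle g (x # a)"
      using c by simp
    finally have "cocycle g (y # f z x # c) = cocycle g (y # b)"
      using xa_yb by simp
    then have b_zc: "weq g f (pos_word b) (pos_word (f z x # c))"
      using IH[OF b] cocycle_Cons_cancel by metis
    have "weq g f (pos_word (x # a)) (pos_word (x # z # c))"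
      using weq_Cons[OF a_zc] by (simp add: pos_word_def)
    moreover have "weq g f (pos_word (y # f z x # c)) (pos_word (y # b))"
      using weq_Cons[OF weq_sym[OF b_zc]] by (simp add: pos_word_def)
    ultimately show ?thesis
      using rel u v by (blast intro: weq_trans)
  qed
qed

end


section \<open>Generalized torsion in the structure group\<close>

lemma exists_pos_funpow_eq_id:
  fixes s :: "'a::finite \<Rightarrow> 'a"
  assumes "bij s"
  obtains k where "0 < k" "s ^^ k = id"
proof -
  have "inj ((\<circ>) s)"
    using assms by (auto simp: inj_def fun_eq_iff bij_def)
  then obtain k where "0 < k" "((\<circ>) s ^^ k) id = id"
    using funpow_inj_finite[of "(\<circ>) s" id] by auto
  moreover have "((\<circ>) s ^^ n) id = s ^^ n" for n
    by (induction n) auto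
  ultimately show ?thesis
    using that by metis
qed

lemma pigeonhole_nat_to_finite:
  fixes F :: "nat \<Rightarrow> 'b::finite"
  obtains i j where "i < j" "F i = F j"
proof -
  have "\<not> inj F"
    using finite_imageD[of F UNIV] by auto
  then obtain i j where "i \<noteq> j" "F i = F j"
    unfolding inj_def by blast
  then show thesis
    using that by (metis linorder_neqE_nat)
qed

context symmetric_solution
begin

lemma not_weq_letter_commute:
  assumes "word_sdp g W = (d, id, id)" "d p \<noteq> d (inv_into UNIV (g x) p)"
  shows "\<not> weq g f (W @ [(x, False)]) ((x, False) # W)"
proof
  assume "weq g f (W @ [(x, False)]) ((x, False) # W)"
  then have "word_sdp g (W @ [(x, False)]) = word_sdp g ((x, False) # W)"
    by (rule word_sdp_weq)
  then have "fst (word_sdp g (W @ [(x, False)])) p = fst (word_sdp g ((x, False) # W)) p"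
    by (rule arg_cong)
  then show False
    using assms by (simp add: word_sdp_append sdp_mult_def sdp_one_def)
qed

lemma word_sdp_quotient:
  assumes "word_perm g u = word_perm g v" "word_perm_inv g u = word_perm_inv g v"
  shows "word_sdp g (pos_word v @ word_inv (pos_word u))
    = (\<lambda>z. int (cocycle g v z) - int (cocycle g u z), id, id)"
proof -
  have "sdp_mult (word_sdp g (pos_word u)) (word_sdp g (word_inv (pos_word u))) = sdp_one"
    using word_sdp_weq[OF weq_append_word_inv, of "pos_word u"] by (simp add: word_sdp_append)
  then have "sdp_mult (word_sdp g (pos_word v)) (word_sdp g (word_inv (pos_word u)))
    = (\<lambda>z. fst (word_sdp g (pos_word v)) z - fst (word_sdp g (pos_word u)) z, id, id)"
    by (rule sdp_mult_right_inverse) (simp add: word_sdp_pos_word assms)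
  then show ?thesis
    by (simp add: word_sdp_append word_sdp_pos_word)
qed

end

context finite_symmetric_solution
begin

lemma weq_conj_pos_word:
  assumes "word_perm g w = id" "cocycle g A = cocycle g w \<circ> word_perm g u"
  shows "weq g f (pos_word (u @ A)) (pos_word (w @ u))"
proof (rule weq_if_cocycle_eq)
  have "word_perm_inv g w z = z" for z
    using word_perm_word_perm_inv[of w z] assms(1) by simp
  then show "cocycle g (u @ A) = cocycle g (w @ u)"
    using assms(2) by (simp add: fun_eq_iff cocycle_append)
qed

lemma quotient_commutes_with_pos_word:
  assumes "word_perm g w = id" "word_perm g u = word_perm g v"
  shows "word_class g f (pos_word v @ word_inv (pos_word u))
      \<otimes>\<^bsub>structure_group g f\<^esub> word_class g f (pos_word w)
    = word_class g f (pos_word w)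
      \<otimes>\<^bsub>structure_group g f\<^esub> word_class g f (pos_word v @ word_inv (pos_word u))"
proof -
  interpret group "structure_group g f" by (rule group_structure_group)
  obtain A where A: "cocycle g A = cocycle g w \<circ> word_perm g u"
    using cocycle_surj by blast
  have "weq g f (pos_word (u @ A)) (pos_word (w @ u))"
    and "weq g f (pos_word (v @ A)) (pos_word (w @ v))"
    using weq_conj_pos_word[OF assms(1)] A assms(2) by simp_all
  then show ?thesis
    using commute_if_conj_eq[of "word_class g f (pos_word u)" "word_class g f (pos_word v)"
        "word_class g f (pos_word A)" "word_class g f (pos_word w)"]
    by (simp add: carrier_structure_group mult_structure_group inv_structure_group
        word_class_eq_iff pos_word_append rangeI)
qed

theorem structure_group_has_generalized_torsion:
  assumes "g x p \<noteq> p"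
  shows "\<exists>t. generalized_torsion (structure_group g f) t"
proof -
  let ?G = "structure_group g f"
  interpret G: group ?G by (rule group_structure_group)
  obtain k where k: "0 < k" "g x ^^ k = id"
    using exists_pos_funpow_eq_id[OF bij_g] by blast
  have "\<forall>n. \<exists>w. cocycle g w = (\<lambda>z. if z = p then n else 0)"
    using cocycle_surj by blast
  then obtain u where u: "\<And>n. cocycle g (u n) = (\<lambda>z. if z = p then n else 0)"
    by metis
  obtain i j where "i < j"
    and "(word_perm g (u i), word_perm_inv g (u i)) = (word_perm g (u j), word_perm_inv g (u j))"
    by (rule pigeonhole_nat_to_finite)
  then have ij: "i < j" "word_perm g (u i) = word_perm g (u j)"
    "word_perm_inv g (u i) = word_perm_inv g (u j)"
    by simp_all
  define X where "X = word_class g f [(x, False)]"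
  define W where "W = pos_word (u j) @ word_inv (pos_word (u i))"
  define N where "N = word_class g f W"
  have carrier: "X \<in> carrier ?G" "N \<in> carrier ?G"
    by (simp_all add: X_def N_def carrier_structure_group)
  have "N \<otimes>\<^bsub>?G\<^esub> X [^]\<^bsub>?G\<^esub> k = X [^]\<^bsub>?G\<^esub> k \<otimes>\<^bsub>?G\<^esub> N"
    using quotient_commutes_with_pos_word[of "replicate k x"] k ij(2)
    by (simp add: N_def W_def X_def pow_structure_group word_perm_replicate)
  moreover have "N \<otimes>\<^bsub>?G\<^esub> X \<noteq> X \<otimes>\<^bsub>?G\<^esub> N"
  proof -
    have "inv_into UNIV (g x) p \<noteq> p"
      using assms by (metis g_inv_cancel(1))
    then have "\<not> weq g f (W @ [(x, False)]) ((x, False) # W)"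
      unfolding W_def using ij(1)
      by (intro not_weq_letter_commute[OF word_sdp_quotient[OF ij(2,3)], of p]) (simp add: u)
    then show ?thesis
      by (simp add: N_def X_def mult_structure_group word_class_eq_iff)
  qed
  ultimately show ?thesis
    using G.generalized_torsion_commutator[OF carrier(2,1) k(1)] by blast
qed

end

lemma symmetric_solution_if_symmetric_sol:
  assumes "non_degenerate g f" "symmetric_sol g f"
  shows "symmetric_solution g f"
proof
  show "bij (g x)" for x
    using assms(1) by (simp add: non_degenerate_def)
  have "sol_map g f \<circ> sol_map g f = id" "braided_sol g f"
    using assms(2) by (simp_all add: symmetric_sol_def involutive_sol_def)
  then show "g (g x y) (f y x) = x" "g (g x y) \<circ> g (f y x) = g x \<circ> g y" for x y
    by (auto simp: fun_eq_iff sol_map_def braided_sol_def S12_def S23_def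
        dest: fun_cong[of _ _ "(x, y)"] fun_cong[of _ _ "(x, y, _)"])
qed

theorem theorem1:
  fixes g f :: "'a::finite \<Rightarrow> 'a \<Rightarrow> 'a"
  assumes "bij (sol_map g f)"
    and "non_degenerate g f"
    and "symmetric_sol g f"
    and "\<not> trivial_sol g f"
  shows "\<not> bi_orderable (structure_group g f) \<and>
         (\<exists>t. generalized_torsion (structure_group g f) t)"
proof -
  interpret finite_symmetric_solution g f
    using symmetric_solution_if_symmetric_sol[OF assms(2,3)]
    by (simp add: finite_symmetric_solution_def)
  have "\<exists>x p. g x p \<noteq> p"
  proof (rule ccontr)
    assume "\<nexists>x p. g x p \<noteq> p"
    then have "g x = id" "f y x = x" for x y
      using g_involutive[of x y] by auto
    then show False
      using assms(4) by (simp add: trivial_sol_def fun_eq_iff)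
  qed
  then obtain t where "generalized_torsion (structure_group g f) t"
    using structure_group_has_generalized_torsion by blast
  then show ?thesis
    using group.not_bi_orderable_if_generalized_torsion[OF group_structure_group] by blast
qed

end
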